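(* Let $n\ge2$, $\frac34<a\le1$, $b=\frac12$, let $x\in\mathbb{R}^n$ and $0<\delta<1$, and let $\mathcal{A}_k(x,\delta)$ denote the collection of slabs of $\mathcal{A}_k$ contained in $F_k\cap Q(x,\delta)$. Then for every $\varepsilon>0$ and all $k$ sufficiently large depending on $\varepsilon$, there is a sub-collection $\mathcal{A}'_k\subset\mathcal{A}_k(x,\delta)$ such that (i) $|\mathcal{A}'_k|\gtrsim R_k^{-\varepsilon}|\mathcal{A}_k(x,\delta)|$; (ii) if $(x_1,\tilde x)$ and $(y_1,\tilde y)$, with $x_1,y_1\in\mathbb{R}$ and $\tilde x,\tilde y\in\mathbb{R}^{n-1}$, are the centers of two slabs of $\mathcal{A}'_k$ with $\tilde x\ne\tilde y$, then $|\tilde x-\tilde y|\gtrsim 1/(Q_k^{\frac{n}{n-1}}D_k)$.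
   Context: For $k\ge k_0$ let $R_k=2^k$, $D_k=R_k^{(n-(n-1)a+nb)/(n+1)}$, $Q_k=R_k^{\frac{n-1}{n+1}(2a-b-1)}$. A point $(p_1/q,\dots,p_n/q)$, $p_j,q\in\mathbb{Z}$, is an admissible fraction if $\gcd(p_1,q)=1$ and: $p_2,\dots,p_n$ arbitrary when $q$ is odd; all even when $q\equiv0\pmod4$; all odd when $q\equiv2\pmod4$. Fix $0<c\ll1$. $\mathcal{A}_k$ is the collection of axis-parallel boxes ("slabs") of dimensions $cR_k^{-1/2}\times cR_k^{-1}\times\cdots\times cR_k^{-1}$ (long side in the $x_1$ direction) centered at $\big(2p_1R_k/(qD_k^2),p_2/(D_kq),\dots,p_n/(D_kq)\big)$ with $(p_1/q,\dots,p_n/q)$ admissible and $1\le q\le Q_k$, and $F_k=\bigcup_{s\in\mathcal{A}_k}s$. $Q(x,\delta)$ is the cube of side-length $\delta$ centered at $x$. $X\gtrsim Y$ means $X\ge CY$ for a constant $C>0$ independent of $k$. *)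

theory Defs
  imports "HOL-Analysis.Analysis"
begin

text \<open>Points of R^n are represented as functions nat => real; coordinate j (1-based in the
paper) is the value at index j-1, i.e. the x_1 direction is index 0. Coordinates with index >= n
are required to vanish.\<close>

definition in_Rn :: "nat \<Rightarrow> (nat \<Rightarrow> real) \<Rightarrow> bool" where
  "in_Rn n y \<longleftrightarrow> (\<forall>i\<ge>n. y i = 0)"

definition R_k :: "nat \<Rightarrow> real" where
  "R_k k = 2 ^ k"

definition D_k :: "nat \<Rightarrow> real \<Rightarrow> real \<Rightarrow> nat \<Rightarrow> real" where
  "D_k n a b k = R_k k powr ((real n - (real n - 1) * a + real n * b) / (real n + 1))"

definition Q_k :: "nat \<Rightarrow> real \<Rightarrow> real \<Rightarrow> nat \<Rightarrow> real" where
  "Q_k n a b k = R_k k powr ((real n - 1) / (real n + 1) * (2 * a - b - 1))"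

text \<open>Admissible fraction (p_1/q,...,p_n/q); p j is the numerator of coordinate j+1.\<close>
definition admissible :: "nat \<Rightarrow> (nat \<Rightarrow> int) \<Rightarrow> int \<Rightarrow> bool" where
  "admissible n p q \<longleftrightarrow> gcd (p 0) q = 1 \<and>
     (odd q \<or>
      (q mod 4 = 0 \<and> (\<forall>j\<in>{1..<n}. even (p j))) \<or>
      (q mod 4 = 2 \<and> (\<forall>j\<in>{1..<n}. odd (p j))))"

definition slab_center :: "nat \<Rightarrow> real \<Rightarrow> real \<Rightarrow> nat \<Rightarrow> (nat \<Rightarrow> int) \<Rightarrow> int \<Rightarrow> (nat \<Rightarrow> real)" where
  "slab_center n a b k p q = (\<lambda>i.
     if i = 0 then 2 * real_of_int (p 0) * R_k k / (real_of_int q * (D_k n a b k)\<^sup>2)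
     else if i < n then real_of_int (p i) / (D_k n a b k * real_of_int q)
     else 0)"

definition slab :: "nat \<Rightarrow> real \<Rightarrow> nat \<Rightarrow> (nat \<Rightarrow> real) \<Rightarrow> (nat \<Rightarrow> real) set" where
  "slab n c k z = {y. in_Rn n y \<and>
      \<bar>y 0 - z 0\<bar> \<le> c * R_k k powr (-1/2) / 2 \<and>
      (\<forall>i\<in>{1..<n}. \<bar>y i - z i\<bar> \<le> c * R_k k powr (-1) / 2)}"

text \<open>The collection A_k, represented by the set of centres of its slabs.\<close>
definition centers_A :: "nat \<Rightarrow> real \<Rightarrow> real \<Rightarrow> nat \<Rightarrow> (nat \<Rightarrow> real) set" where
  "centers_A n a b k = {slab_center n a b k p q | p q.
      admissible n p q \<and> 1 \<le> q \<and> real_of_int q \<le> Q_k n a b k}"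

definition F_k :: "nat \<Rightarrow> real \<Rightarrow> real \<Rightarrow> real \<Rightarrow> nat \<Rightarrow> (nat \<Rightarrow> real) set" where
  "F_k n a b c k = (\<Union>z\<in>centers_A n a b k. slab n c k z)"

definition cube :: "nat \<Rightarrow> (nat \<Rightarrow> real) \<Rightarrow> real \<Rightarrow> (nat \<Rightarrow> real) set" where
  "cube n x \<delta> = {y. in_Rn n y \<and> (\<forall>i<n. \<bar>y i - x i\<bar> \<le> \<delta> / 2)}"

definition A_loc :: "nat \<Rightarrow> real \<Rightarrow> real \<Rightarrow> real \<Rightarrow> nat \<Rightarrow> (nat \<Rightarrow> real) \<Rightarrow> real \<Rightarrow> (nat \<Rightarrow> real) set" where
  "A_loc n a b c k x \<delta> = {z \<in> centers_A n a b k. slab n c k z \<subseteq> F_k n a b c k \<inter> cube n x \<delta>}"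

definition tail_dist :: "nat \<Rightarrow> (nat \<Rightarrow> real) \<Rightarrow> (nat \<Rightarrow> real) \<Rightarrow> real" where
  "tail_dist n z w = sqrt (\<Sum>i\<in>{1..<n}. (z i - w i)\<^sup>2)"

end

(*
  The first coordinate 2 p_1 R / (q D^2) of a centre determines the reduced fraction p_1 / q, so
  A_k(x, delta) splits into fibres on which q is fixed and the tail numerators (p_2, ..., p_n)
  range over a box of admissible integers with sides of length about D q (delta - c / R) >= 4 q.
  Call a centre crowded if another centre with a different tail lies within rho / D of it in every
  tail coordinate, where rho = C Q^(-n/(n-1)). Then every p_i / q is within rho of a fraction
  p'_i / q' with q' <= Q, and p_j / q differs from p'_j / q' for some j. For fixed q' the numbers
  p q' - p' q are multiples of gcd q q' of size below q q' rho, so the possible p lie in at most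
  3 q q' rho / gcd q q' residue classes modulo q / gcd q q' (in coordinate j there are none at all
  when q q' rho <= gcd q q'), a proportion O(q' rho) of each side of the box. Summing over q' and j,
  at most (n - 1) (24 rho)^(n-1) Q^n <= 1/2 of every fibre is crowded, so the uncrowded centres
  are a separated subcollection containing half of A_k(x, delta).
*)
theory Submission
  imports Defs "HOL-Real_Asymp.Real_Asymp"
begin

section \<open>Counting integers in intervals\<close>

lemma card_int_interval_bounds:
  fixes A B :: real
  shows "finite {t::int. A \<le> t \<and> t \<le> B}"
    and "real (card {t::int. A \<le> t \<and> t \<le> B}) \<le> max 0 (B - A + 1)"
    and "B - A - 1 \<le> real (card {t::int. A \<le> t \<and> t \<le> B})"
proof -
  have eq: "{t::int. A \<le> t \<and> t \<le> B} = {\<lceil>A\<rceil>..\<lfloor>B\<rfloor>}"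
    by (auto simp: ceiling_le_iff le_floor_iff)
  show "finite {t::int. A \<le> t \<and> t \<le> B}"
    unfolding eq by simp
  have card: "real (card {t::int. A \<le> t \<and> t \<le> B}) = max 0 (of_int (\<lfloor>B\<rfloor> - \<lceil>A\<rceil> + 1))"
    unfolding eq by simp
  have "real_of_int (\<lfloor>B\<rfloor> - \<lceil>A\<rceil> + 1) \<le> B - A + 1"
    and "B - A - 1 \<le> real_of_int (\<lfloor>B\<rfloor> - \<lceil>A\<rceil> + 1)"
    by linarith+
  then show "real (card {t::int. A \<le> t \<and> t \<le> B}) \<le> max 0 (B - A + 1)"
    and "B - A - 1 \<le> real (card {t::int. A \<le> t \<and> t \<le> B})"
    unfolding card by (auto intro: max.mono order_trans[OF _ max.cobounded2])
qed

lemma card_congruent_in_cball_bounds: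
  fixes d s :: int and m r :: real
  assumes d: "d > 0"
  defines "S \<equiv> {p::int. \<bar>real_of_int p - m\<bar> \<le> r \<and> p mod d = s mod d}"
  shows "finite S" and "real (card S) \<le> max 0 (2 * r / d + 1)" and "2 * r / d - 1 \<le> real (card S)"
proof -
  define s' where "s' = s mod d"
  define A where "A = (m - r - s') / d"
  define B where "B = (m + r - s') / d"
  have S_eq: "S = (\<lambda>t. d * t + s') ` {t::int. A \<le> t \<and> t \<le> B}"
  proof -
    have "\<bar>real_of_int (d * t + s') - m\<bar> \<le> r \<longleftrightarrow> A \<le> t \<and> t \<le> B" for t
      using d by (auto simp: A_def B_def abs_le_iff pos_divide_le_eq pos_le_divide_eq algebra_simps)
    moreover have "p mod d = s' \<longleftrightarrow> (\<exists>t. p = d * t + s')" for p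
      using d by (auto simp: s'_def) (metis div_mult_mod_eq mult.commute)
    ultimately show ?thesis
      unfolding S_def s'_def[symmetric] by auto
  qed
  have inj: "inj_on (\<lambda>t. d * t + s') X" for X
    using d by (auto simp: inj_on_def)
  have BA: "B - A = 2 * r / d"
    using d by (simp add: A_def B_def field_simps)
  show "finite S"
    unfolding S_eq using card_int_interval_bounds(1) by blast
  show "real (card S) \<le> max 0 (2 * r / d + 1)" and "2 * r / d - 1 \<le> real (card S)"
    unfolding S_eq card_image[OF inj] using card_int_interval_bounds(2,3)[where A=A and B=B] BA by simp_all
qed

lemma card_multiples_in_cball_le:
  fixes g :: int and X :: real
  assumes "g > 0" and "X \<ge> 0"
  shows "finite {l::int. \<bar>l\<bar> \<le> X \<and> g dvd l}"
    and "real (card {l::int. \<bar>l\<bar> \<le> X \<and> g dvd l}) \<le> 2 * X / g + 1"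
proof -
  have eq: "{l::int. \<bar>l\<bar> \<le> X \<and> g dvd l} = {l::int. \<bar>real_of_int l - 0\<bar> \<le> X \<and> l mod g = 0 mod g}"
    by (simp add: dvd_eq_mod_eq_0)
  show "finite {l::int. \<bar>l\<bar> \<le> X \<and> g dvd l}"
    unfolding eq using card_congruent_in_cball_bounds(1)[OF assms(1)] by blast
  show "real (card {l::int. \<bar>l\<bar> \<le> X \<and> g dvd l}) \<le> 2 * X / g + 1"
    unfolding eq using card_congruent_in_cball_bounds(2)[OF assms(1), of 0 X 0] assms by simp
qed

lemma card_solutions_in_cball_le:
  fixes q q' l :: int and m r :: real
  assumes q: "q > 0" and q': "q' > 0" and r: "r \<ge> 0"
  defines "T \<equiv> {p::int. \<bar>real_of_int p - m\<bar> \<le> r \<and> (\<exists>p'::int. p * q' - p' * q = l)}"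
  shows "finite T" and "real (card T) \<le> 2 * r * gcd q q' / q + 1"
proof -
  show fin: "finite T"
    by (rule finite_subset[OF _ card_int_interval_bounds(1)[of "m - r" "m + r"]])
       (auto simp: T_def abs_le_iff)
  show "real (card T) \<le> 2 * r * gcd q q' / q + 1"
  proof (cases "T = {}")
    case True
    then show ?thesis using q r by simp
  next
    case False
    then obtain p1 p1' where p1: "p1 * q' - p1' * q = l"
      unfolding T_def by blast
    define g where "g = gcd q q'"
    define d where "d = q div g"
    define e where "e = q' div g"
    have g: "g > 0" and qd: "q = g * d" and qe: "q' = g * e"
      using q by (simp_all add: g_def d_def e_def)
    then have d: "d > 0"
      using q by (simp add: zero_less_mult_iff)
    have cop: "coprime d e"
      unfolding d_def e_def g_def using q by (intro div_gcd_coprime) simp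
    have "T \<subseteq> {p. \<bar>real_of_int p - m\<bar> \<le> r \<and> p mod d = p1 mod d}"
    proof safe
      fix p assume "p \<in> T"
      then obtain p' where "p * q' - p' * q = l" and near: "\<bar>real_of_int p - m\<bar> \<le> r"
        unfolding T_def by blast
      with p1 have "g * ((p - p1) * e) = g * ((p' - p1') * d)"
        by (simp add: qd qe algebra_simps)
      then have "d dvd (p - p1) * e"
        using g by (metis dvd_triv_right mult_cancel_left less_irrefl)
      then show "p mod d = p1 mod d" and "\<bar>real_of_int p - m\<bar> \<le> r"
        using cop near by (simp_all add: coprime_dvd_mult_left_iff mod_eq_dvd_iff)
    qed
    then have "real (card T) \<le> real (card {p. \<bar>real_of_int p - m\<bar> \<le> r \<and> p mod d = p1 mod d})"
      using card_congruent_in_cball_bounds(1)[OF d] by (simp add: card_mono)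
    also have "\<dots> \<le> max 0 (2 * r / d + 1)"
      by (rule card_congruent_in_cball_bounds(2)[OF d])
    also have "2 * r / d = 2 * r * g / q"
      using g by (simp add: qd)
    finally show ?thesis
      using r g q by (simp add: g_def)
  qed
qed

section \<open>Numerators close to fractions with other denominators\<close>

definition admissible_numerator :: "int \<Rightarrow> int \<Rightarrow> bool" where
  "admissible_numerator q p \<longleftrightarrow> odd q \<or> (q mod 4 = 0 \<and> even p) \<or> (q mod 4 = 2 \<and> odd p)"

lemma admissible_iff_numerators:
  "admissible n p q \<longleftrightarrow> gcd (p 0) q = 1 \<and> (\<forall>i\<in>{1..<n}. admissible_numerator q (p i))"
proof -
  have "even q \<Longrightarrow> q mod 4 = 0 \<or> q mod 4 = 2"
    by presburger
  then show ?thesis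
    unfolding admissible_def admissible_numerator_def by auto
qed

definition numerator_window :: "real \<Rightarrow> real \<Rightarrow> int \<Rightarrow> int set" where
  "numerator_window m r q = {p. \<bar>real_of_int p - m\<bar> \<le> r \<and> admissible_numerator q p}"

lemma finite_numerator_window: "finite (numerator_window m r q)"
  by (rule finite_subset[OF _ card_int_interval_bounds(1)[of "m - r" "m + r"]])
     (auto simp: numerator_window_def abs_le_iff)

lemma card_numerator_window_ge:
  assumes "r \<ge> 2"
  shows "r / 2 \<le> real (card (numerator_window m r q))"
proof -
  define s :: int where "s = (if q mod 4 = 2 then 1 else 0)"
  have "{p. \<bar>real_of_int p - m\<bar> \<le> r \<and> p mod 2 = s mod 2} \<subseteq> numerator_window m r q"
    unfolding numerator_window_def admissible_numerator_def s_def by auto presburger+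
  then have "real (card {p. \<bar>real_of_int p - m\<bar> \<le> r \<and> p mod 2 = s mod 2})
      \<le> real (card (numerator_window m r q))"
    by (simp add: card_mono finite_numerator_window)
  moreover have "2 * r / 2 - 1 \<le> real (card {p. \<bar>real_of_int p - m\<bar> \<le> r \<and> p mod 2 = s mod 2})"
    using card_congruent_in_cball_bounds(3)[where d=2 and m=m and r=r and s=s] by simp
  ultimately show ?thesis
    using assms by simp
qed

text \<open>The condition says that \<open>p / q\<close> lies within \<open>\<rho>\<close> of a fraction with denominator \<open>q'\<close>,
  different from \<open>p / q\<close> if \<open>strict\<close> holds.\<close>
definition approximable_numerators :: "real \<Rightarrow> real \<Rightarrow> int \<Rightarrow> int \<Rightarrow> real \<Rightarrow> bool \<Rightarrow> int set" where
  "approximable_numerators m r q q' \<rho> strict =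
     {p \<in> numerator_window m r q. \<exists>p'. (strict \<longrightarrow> p * q' \<noteq> p' * q) \<and> \<bar>real_of_int (p * q' - p' * q)\<bar> < real_of_int (q * q') * \<rho>}"

lemma approximable_numerators_strict_empty:
  assumes "real_of_int (q * q') * \<rho> \<le> real_of_int (gcd q q')"
  shows "approximable_numerators m r q q' \<rho> True = {}"
proof -
  have False if "p * q' \<noteq> p' * q" and "\<bar>real_of_int (p * q' - p' * q)\<bar> < q * q' * \<rho>" for p p'
  proof -
    have "\<bar>gcd q q'\<bar> \<le> \<bar>p * q' - p' * q\<bar>"
      by (rule dvd_imp_le_int) (use that(1) in simp_all)
    then show False
      using that(2) assms by linarith
  qed
  then show ?thesis
    unfolding approximable_numerators_def by auto
qed

lemma card_approximable_numerators_le_product: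
  fixes q q' :: int and \<rho> r :: real
  assumes q: "q > 0" and q': "q' > 0" and \<rho>: "\<rho> \<ge> 0" and r: "r \<ge> 0"
  shows "real (card (approximable_numerators m r q q' \<rho> strict))
    \<le> (2 * (q * q' * \<rho>) / gcd q q' + 1) * (2 * r * gcd q q' / q + 1)"
proof -
  define g where "g = gcd q q'"
  define X where "X = q * q' * \<rho>"
  define M where "M = {l::int. \<bar>l\<bar> \<le> X \<and> g dvd l}"
  define T where "T l = {p::int. \<bar>real_of_int p - m\<bar> \<le> r \<and> (\<exists>p'::int. p * q' - p' * q = l)}" for l
  have g: "g > 0" and X: "X \<ge> 0"
    using q q' \<rho> unfolding g_def X_def by simp_all
  have finM: "finite M"
    unfolding M_def by (rule card_multiples_in_cball_le(1)[OF g X])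
  have "approximable_numerators m r q q' \<rho> strict \<subseteq> (\<Union>l\<in>M. T l)"
  proof
    fix p assume "p \<in> approximable_numerators m r q q' \<rho> strict"
    then obtain p' where near: "\<bar>real_of_int p - m\<bar> \<le> r"
      and close: "\<bar>real_of_int (p * q' - p' * q)\<bar> < X"
      unfolding approximable_numerators_def numerator_window_def X_def by auto
    have "p * q' - p' * q \<in> M"
      using close unfolding M_def g_def by simp
    moreover have "p \<in> T (p * q' - p' * q)"
      using near unfolding T_def by blast
    ultimately show "p \<in> (\<Union>l\<in>M. T l)"
      by blast
  qed
  then have "real (card (approximable_numerators m r q q' \<rho> strict)) \<le> real (card (\<Union>l\<in>M. T l))"
    using finM card_solutions_in_cball_le(1)[OF q q' r] by (simp add: T_def card_mono)
  also have "\<dots> \<le> (\<Sum>l\<in>M. real (card (T l)))"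
    using card_UN_le[OF finM, of T] by (simp only: of_nat_sum[symmetric] of_nat_le_iff)
  also have "\<dots> \<le> (\<Sum>l\<in>M. 2 * r * g / q + 1)"
    by (intro sum_mono) (use card_solutions_in_cball_le(2)[OF q q' r] in \<open>simp add: T_def g_def\<close>)
  also have "\<dots> = real (card M) * (2 * r * g / q + 1)"
    by simp
  also have "\<dots> \<le> (2 * X / g + 1) * (2 * r * g / q + 1)"
    using card_multiples_in_cball_le(2)[OF g X] q r g by (intro mult_right_mono) (simp_all add: M_def)
  finally show ?thesis
    by (simp add: X_def g_def)
qed

lemma card_approximable_numerators_le:
  fixes q q' :: int and \<rho> r :: real
  assumes q: "q > 0" and q': "q' > 0" and \<rho>: "\<rho> > 0"
    and gcd_le: "real_of_int (gcd q q') \<le> real_of_int (q * q') * \<rho>" and r: "2 * q \<le> r"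
  shows "real (card (approximable_numerators m r q q' \<rho> strict))
    \<le> 24 * real_of_int q' * \<rho> * real (card (numerator_window m r q))"
proof -
  define g where "g = gcd q q'"
  define X where "X = q * q' * \<rho>"
  have g: "g > 0" and gX: "g \<le> X"
    using q gcd_le unfolding g_def X_def by simp_all
  have r0: "r \<ge> 0"
    using q r by linarith
  have "real (card (approximable_numerators m r q q' \<rho> strict)) \<le> (2 * X / g + 1) * (2 * r * g / q + 1)"
    using card_approximable_numerators_le_product[OF q q' less_imp_le[OF \<rho>] r0] by (simp add: X_def g_def)
  also have "\<dots> \<le> (3 * X / g) * (4 * r * g / q)"
  proof (rule mult_mono)
    show "2 * X / g + 1 \<le> 3 * X / g"
      using gX g by (simp add: field_simps)
    have "1 \<le> real_of_int g"
      using g by linarith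
    from mult_left_mono[OF this r0] have "real_of_int q \<le> r * g"
      using q r by linarith
    then show "2 * r * g / q + 1 \<le> 4 * r * g / q"
      using q by (simp add: field_simps)
  qed (use q g gX r0 in simp_all)
  also have "\<dots> = 12 * real_of_int q' * \<rho> * r"
    using q g by (simp add: X_def field_simps)
  also have "\<dots> \<le> 24 * real_of_int q' * \<rho> * real (card (numerator_window m r q))"
    using card_numerator_window_ge[of r m q] q q' \<rho> r by simp
  finally show ?thesis .
qed

lemma card_PiE_approximable_numerators_le:
  fixes q q' :: int and \<rho> r :: real
  assumes I: "finite I" "j \<in> I" and q: "q > 0" and q': "q' > 0" and \<rho>: "\<rho> > 0" and r: "2 * q \<le> r"
  shows "real (card (PiE I (\<lambda>i. approximable_numerators (m i) r q q' \<rho> (i = j))))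
    \<le> (24 * real_of_int q' * \<rho>) ^ card I * real (card (PiE I (\<lambda>i. numerator_window (m i) r q)))"
proof (cases "real_of_int (gcd q q') \<le> real_of_int (q * q') * \<rho>")
  case True
  have "(\<Prod>i\<in>I. real (card (approximable_numerators (m i) r q q' \<rho> (i = j))))
      \<le> (\<Prod>i\<in>I. 24 * q' * \<rho> * real (card (numerator_window (m i) r q)))"
    using card_approximable_numerators_le[OF q q' \<rho> True r] by (intro prod_mono) simp
  then show ?thesis
    using I by (simp add: card_PiE prod.distrib)
next
  case False
  then have "PiE I (\<lambda>i. approximable_numerators (m i) r q q' \<rho> (i = j)) = {}"
    using I approximable_numerators_strict_empty[of q q' \<rho>] by (auto simp: PiE_eq_empty_iff)
  then show ?thesis
    using q' \<rho> by simp
qed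

lemma card_UN_PiE_approximable_numerators_le:
  fixes q :: int and \<rho> r Q :: real
  assumes I: "finite I" and q: "q > 0" and \<rho>: "\<rho> > 0" and Q: "Q \<ge> 0" and r: "2 * q \<le> r"
  shows "real (card (\<Union>q'\<in>{1..\<lfloor>Q\<rfloor>}. \<Union>j\<in>I. PiE I (\<lambda>i. approximable_numerators (m i) r q q' \<rho> (i = j))))
    \<le> card I * (24 * \<rho>) ^ card I * Q ^ (card I + 1) * real (card (PiE I (\<lambda>i. numerator_window (m i) r q)))"
proof -
  let ?P = "real (card (PiE I (\<lambda>i. numerator_window (m i) r q)))"
  let ?B = "\<lambda>q' j. PiE I (\<lambda>i. approximable_numerators (m i) r q q' \<rho> (i = j))"
  have "real (card (\<Union>q'\<in>{1..\<lfloor>Q\<rfloor>}. \<Union>j\<in>I. ?B q' j)) \<le> (\<Sum>q'\<in>{1..\<lfloor>Q\<rfloor>}. \<Sum>j\<in>I. real (card (?B q' j)))"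
  proof -
    have "card (\<Union>q'\<in>{1..\<lfloor>Q\<rfloor>}. \<Union>j\<in>I. ?B q' j) \<le> (\<Sum>q'\<in>{1..\<lfloor>Q\<rfloor>}. card (\<Union>j\<in>I. ?B q' j))"
      by (rule card_UN_le) simp
    also have "\<dots> \<le> (\<Sum>q'\<in>{1..\<lfloor>Q\<rfloor>}. \<Sum>j\<in>I. card (?B q' j))"
      by (intro sum_mono card_UN_le I)
    finally show ?thesis
      by (simp only: of_nat_sum[symmetric] of_nat_le_iff)
  qed
  also have "\<dots> \<le> (\<Sum>q'\<in>{1..\<lfloor>Q\<rfloor>}. \<Sum>j\<in>I. (24 * Q * \<rho>) ^ card I * ?P)"
  proof (intro sum_mono)
    fix q' j assume q'Q: "q' \<in> {1..\<lfloor>Q\<rfloor>}" and j: "j \<in> I"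
    then have "q' > 0" and "real_of_int q' \<le> Q"
      by (simp_all add: le_floor_iff)
    then have "(24 * real_of_int q' * \<rho>) ^ card I \<le> (24 * Q * \<rho>) ^ card I"
      using \<rho> by (intro power_mono) auto
    then show "real (card (?B q' j)) \<le> (24 * Q * \<rho>) ^ card I * ?P"
      using card_PiE_approximable_numerators_le[OF I j q \<open>q' > 0\<close> \<rho> r, of m]
      by (meson mult_right_mono of_nat_0_le_iff order_trans)
  qed
  also have "\<dots> = real (nat \<lfloor>Q\<rfloor>) * card I * (24 * Q * \<rho>) ^ card I * ?P"
    by simp
  also have "\<dots> \<le> Q * card I * (24 * Q * \<rho>) ^ card I * ?P"
    using Q \<rho> by (intro mult_right_mono) auto
  also have "\<dots> = card I * (24 * \<rho>) ^ card I * Q ^ (card I + 1) * ?P"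
    by (simp add: power_mult_distrib)
  finally show ?thesis .
qed

section \<open>Slabs and the collection \<open>A_loc\<close>\<close>

lemma R_k_pos: "R_k k > 0"
  by (simp add: R_k_def)

lemma R_k_powr_neg_le_one:
  assumes "\<epsilon> \<ge> 0"
  shows "R_k k powr (-\<epsilon>) \<le> 1"
proof -
  have "R_k k powr (-\<epsilon>) \<le> R_k k powr 0"
    using assms by (intro powr_mono) (simp_all add: R_k_def)
  then show ?thesis
    by (simp add: R_k_def)
qed

lemma D_k_pos: "D_k n a b k > 0"
  using R_k_pos[of k] by (simp add: D_k_def)

lemma Q_k_pos: "Q_k n a b k > 0"
  using R_k_pos[of k] by (simp add: Q_k_def)

lemma slab_center_simps:
  "slab_center n a b k p q 0 = 2 * real_of_int (p 0) * R_k k / (real_of_int q * (D_k n a b k)\<^sup>2)"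
  "0 < i \<Longrightarrow> i < n \<Longrightarrow> slab_center n a b k p q i = real_of_int (p i) / (D_k n a b k * real_of_int q)"
  "1 \<le> n \<Longrightarrow> in_Rn n (slab_center n a b k p q)"
  by (simp_all add: slab_center_def in_Rn_def)

lemma slab_subset_cube_iff:
  assumes c: "c \<ge> 0" and z: "in_Rn n z"
  shows "slab n c k z \<subseteq> cube n x \<delta> \<longleftrightarrow>
    (\<forall>i<n. \<bar>z i - x i\<bar> \<le> \<delta> / 2 - (if i = 0 then c * R_k k powr (-1/2) / 2 else c * R_k k powr (-1) / 2))"
    (is "_ \<longleftrightarrow> (\<forall>i<n. \<bar>z i - x i\<bar> \<le> \<delta> / 2 - ?h i)")
proof
  have h: "?h i \<ge> 0" for i
    using c by simp
  have slab_iff: "y \<in> slab n c k z \<longleftrightarrow> in_Rn n y \<and> (\<forall>i<n. \<bar>y i - z i\<bar> \<le> ?h i)" if "n \<ge> 1" for y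
    using that unfolding slab_def by (auto simp: Ball_def)
  show "\<forall>i<n. \<bar>z i - x i\<bar> \<le> \<delta> / 2 - ?h i" if sub: "slab n c k z \<subseteq> cube n x \<delta>"
  proof (intro allI impI)
    fix i assume i: "i < n"
    \<comment> \<open>Move the centre to either end of the slab in direction \<open>i\<close>.\<close>
    have in_cube: "z(i := z i + s) \<in> cube n x \<delta>" if "\<bar>s\<bar> \<le> ?h i" for s
      using i z that c by (intro subsetD[OF sub]) (auto simp: slab_iff in_Rn_def)
    have coord: "\<bar>z i + s - x i\<bar> \<le> \<delta> / 2" if "\<bar>s\<bar> \<le> ?h i" for s
    proof -
      have "\<forall>l<n. \<bar>(z(i := z i + s)) l - x l\<bar> \<le> \<delta> / 2"
        using in_cube[OF that] unfolding cube_def by blast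
      then have "\<bar>(z(i := z i + s)) i - x i\<bar> \<le> \<delta> / 2"
        using i by blast
      then show ?thesis
        by simp
    qed
    obtain w where w: "w = ?h i" and "w \<ge> 0"
      using h by blast
    then have "\<bar>z i + w - x i\<bar> \<le> \<delta> / 2" and "\<bar>z i + - w - x i\<bar> \<le> \<delta> / 2"
      by (intro coord; simp)+
    then show "\<bar>z i - x i\<bar> \<le> \<delta> / 2 - ?h i"
      unfolding w[symmetric] using \<open>w \<ge> 0\<close> by linarith
  qed
  show "slab n c k z \<subseteq> cube n x \<delta>" if "\<forall>i<n. \<bar>z i - x i\<bar> \<le> \<delta> / 2 - ?h i"
  proof
    fix y assume y: "y \<in> slab n c k z"
    have "\<bar>y i - z i\<bar> \<le> ?h i" if "i < n" for i
      using y that by (cases "i = 0") (auto simp: slab_def)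
    moreover have "\<bar>u - t\<bar> \<le> d" if "\<bar>u - v\<bar> \<le> e" and "\<bar>v - t\<bar> \<le> d - e" for u v t d e :: real
      using that by arith
    ultimately have "\<bar>y i - x i\<bar> \<le> \<delta> / 2" if "i < n" for i
      using that \<open>\<forall>i<n. _\<close> by blast
    then show "y \<in> cube n x \<delta>"
      using y unfolding cube_def slab_def by blast
  qed
qed

lemma slab_center_tail_near_iff:
  assumes "0 < i" "i < n" "q > 0"
  shows "\<bar>slab_center n a b k p q i - y\<bar> \<le> e \<longleftrightarrow>
    \<bar>real_of_int (p i) - D_k n a b k * q * y\<bar> \<le> D_k n a b k * q * e"
proof -
  have Dq: "D_k n a b k * q > 0"
    using assms(3) D_k_pos by simp
  have "slab_center n a b k p q i - y = (real_of_int (p i) - D_k n a b k * q * y) / (D_k n a b k * q)"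
    using assms Dq D_k_pos[of n a b k] by (simp add: slab_center_simps diff_divide_distrib)
  then show ?thesis
    using Dq by (simp add: abs_divide pos_divide_le_eq mult.commute)
qed

lemma slab_center_tail_diff:
  assumes "0 < i" "i < n" "q \<noteq> 0" "q' \<noteq> 0"
  shows "slab_center n a b k p q i - slab_center n a b k p' q' i =
    real_of_int (p i * q' - p' i * q) / (D_k n a b k * q * q')"
  using assms D_k_pos[of n a b k] by (simp add: slab_center_simps field_simps)

lemma slab_center_first_coord_inj:
  assumes eq: "slab_center n a b k p q 0 = slab_center n a b k p' q' 0"
    and coprime: "gcd (p 0) q = 1" "gcd (p' 0) q' = 1" and pos: "q > 0" "q' > 0"
  shows "q = q' \<and> p 0 = p' 0"
proof -
  have "real_of_int (p 0 * q') = real_of_int (p' 0 * q)"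
    using eq pos R_k_pos[of k] D_k_pos[of n a b k] by (simp add: slab_center_simps field_simps)
  then have cross: "p 0 * q' = p' 0 * q"
    by (simp only: of_int_eq_iff)
  then have "q dvd q'" and "q' dvd q"
    using coprime by (metis coprime_dvd_mult_right_iff coprime_iff_gcd_eq_1 coprime_commute dvd_triv_right)+
  then have "q = q'"
    using pos by (simp add: zdvd_antisym_nonneg)
  then show ?thesis
    using cross pos by simp
qed

lemma mem_A_loc_iff:
  assumes n: "n \<ge> 1" and c: "c \<ge> 0"
  shows "z \<in> A_loc n a b c k x \<delta> \<longleftrightarrow>
    (\<exists>p q. z = slab_center n a b k p q \<and> gcd (p 0) q = 1 \<and> 1 \<le> q \<and> q \<le> Q_k n a b k \<and>
       \<bar>z 0 - x 0\<bar> \<le> \<delta> / 2 - c * R_k k powr (-1/2) / 2 \<and>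
       (\<forall>i\<in>{1..<n}. p i \<in> numerator_window (D_k n a b k * q * x i)
                                              (D_k n a b k * q * (\<delta> / 2 - c * R_k k powr (-1) / 2)) q))"
proof -
  let ?r = "\<lambda>q. D_k n a b k * q * (\<delta> / 2 - c * R_k k powr (-1) / 2)"
  have split_first: "(\<forall>i<n. P i) \<longleftrightarrow> P 0 \<and> (\<forall>i\<in>{1..<n}. P i)" for P :: "nat \<Rightarrow> bool"
    using n by (metis atLeastLessThan_iff gr0I less_one order.strict_trans2 not_le)
  have inner: "slab n c k (slab_center n a b k p q) \<subseteq> cube n x \<delta> \<and> admissible n p q \<longleftrightarrow>
      gcd (p 0) q = 1 \<and> \<bar>slab_center n a b k p q 0 - x 0\<bar> \<le> \<delta> / 2 - c * R_k k powr (-1/2) / 2 \<and>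
      (\<forall>i\<in>{1..<n}. p i \<in> numerator_window (D_k n a b k * q * x i) (?r q) q)" if "1 \<le> q" for p q
  proof -
    have "\<bar>slab_center n a b k p q i - x i\<bar> \<le> \<delta> / 2 - c * R_k k powr (-1) / 2 \<longleftrightarrow>
        \<bar>real_of_int (p i) - D_k n a b k * q * x i\<bar> \<le> ?r q" if "i \<in> {1..<n}" for i
      using that \<open>1 \<le> q\<close> by (intro slab_center_tail_near_iff) auto
    then show ?thesis
      unfolding slab_subset_cube_iff[OF c slab_center_simps(3)[OF n]] split_first
        admissible_iff_numerators numerator_window_def
      by auto
  qed
  have "z \<in> A_loc n a b c k x \<delta> \<longleftrightarrow>
      (\<exists>p q. z = slab_center n a b k p q \<and> 1 \<le> q \<and> q \<le> Q_k n a b k \<and>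
         slab n c k (slab_center n a b k p q) \<subseteq> cube n x \<delta> \<and> admissible n p q)"
    unfolding A_loc_def F_k_def centers_A_def by blast
  then show ?thesis
    using inner by (metis (no_types, lifting))
qed

lemma slab_center_tail_close_iff:
  assumes "0 < i" "i < n" "q > 0" "q' > 0"
  shows "\<bar>slab_center n a b k p q i - slab_center n a b k p' q' i\<bar> < \<rho> / D_k n a b k \<longleftrightarrow>
    \<bar>real_of_int (p i * q' - p' i * q)\<bar> < real_of_int (q * q') * \<rho>"
proof -
  have pos: "D_k n a b k * q * q' > 0"
    using assms(3,4) D_k_pos[of n a b k] by simp
  have "\<rho> / D_k n a b k * (D_k n a b k * q * q') = real_of_int (q * q') * \<rho>"
    using D_k_pos[of n a b k] by simp
  then show ?thesis
    using pos unfolding slab_center_tail_diff[OF assms(1,2) less_imp_neq[OF assms(3), symmetric]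
        less_imp_neq[OF assms(4), symmetric]]
    by (simp add: abs_divide divide_less_eq)
qed

section \<open>Fibres over the first coordinate\<close>

definition crowded :: "nat \<Rightarrow> real \<Rightarrow> (nat \<Rightarrow> real) set \<Rightarrow> (nat \<Rightarrow> real) set" where
  "crowded n \<rho> Z = {z \<in> Z. \<exists>w\<in>Z. (\<exists>i\<in>{1..<n}. z i \<noteq> w i) \<and> (\<forall>i\<in>{1..<n}. \<bar>z i - w i\<bar> < \<rho>)}"

locale A_loc_fibre =
  fixes n :: nat and a b c :: real and k :: nat and x :: "nat \<Rightarrow> real" and \<delta> :: real
    and p :: "nat \<Rightarrow> int" and q :: int
  assumes n: "n \<ge> 1" and c: "c \<ge> 0" and coprime: "gcd (p 0) q = 1"
    and q: "1 \<le> q" "q \<le> Q_k n a b k"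
    and first: "\<bar>slab_center n a b k p q 0 - x 0\<bar> \<le> \<delta> / 2 - c * R_k k powr (-1/2) / 2"
begin

definition window_centre :: "nat \<Rightarrow> real" where
  "window_centre i = D_k n a b k * q * x i"

definition window_radius :: real where
  "window_radius = D_k n a b k * q * (\<delta> / 2 - c * R_k k powr (-1) / 2)"

definition tails :: "(nat \<Rightarrow> int) set" where
  "tails = PiE {1..<n} (\<lambda>i. numerator_window (window_centre i) window_radius q)"

definition fibre_point :: "(nat \<Rightarrow> int) \<Rightarrow> nat \<Rightarrow> real" where
  "fibre_point t = slab_center n a b k (t(0 := p 0)) q"

definition approximable_tails :: "real \<Rightarrow> (nat \<Rightarrow> int) set" where
  "approximable_tails \<rho> = (\<Union>q'\<in>{1..\<lfloor>Q_k n a b k\<rfloor>}. \<Union>j\<in>{1..<n}.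
     PiE {1..<n} (\<lambda>i. approximable_numerators (window_centre i) window_radius q q' \<rho> (i = j)))"

lemma fibre_eq_image: "{z \<in> A_loc n a b c k x \<delta>. z 0 = slab_center n a b k p q 0} = fibre_point ` tails"
proof
  show "{z \<in> A_loc n a b c k x \<delta>. z 0 = slab_center n a b k p q 0} \<subseteq> fibre_point ` tails"
  proof
    fix z assume "z \<in> {z \<in> A_loc n a b c k x \<delta>. z 0 = slab_center n a b k p q 0}"
    then have "z \<in> A_loc n a b c k x \<delta>" and "z 0 = slab_center n a b k p q 0"
      by auto
    then obtain p' q' where z: "z = slab_center n a b k p' q'" and "gcd (p' 0) q' = 1" "1 \<le> q'"
      and window: "\<forall>i\<in>{1..<n}. p' i \<in> numerator_window (D_k n a b k * q' * x i)
                                        (D_k n a b k * q' * (\<delta> / 2 - c * R_k k powr (-1) / 2)) q'"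
      unfolding mem_A_loc_iff[OF n c] by (elim exE conjE) (rule that; assumption)
    with \<open>z 0 = _\<close> have "q' = q \<and> p' 0 = p 0"
      using slab_center_first_coord_inj[of n a b k p' q' p q] coprime q by simp
    then have "z = fibre_point (restrict p' {1..<n})" and "restrict p' {1..<n} \<in> tails"
      using window unfolding z fibre_point_def tails_def window_centre_def window_radius_def
      by (auto simp: slab_center_def fun_eq_iff)
    then show "z \<in> fibre_point ` tails"
      by blast
  qed
  show "fibre_point ` tails \<subseteq> {z \<in> A_loc n a b c k x \<delta>. z 0 = slab_center n a b k p q 0}"
  proof
    fix z assume "z \<in> fibre_point ` tails"
    then obtain t where t: "t \<in> tails" and z: "z = fibre_point t"
      by blast
    have "z 0 = slab_center n a b k p q 0"
      by (simp add: z fibre_point_def slab_center_simps)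
    moreover have "gcd ((t(0 := p 0)) 0) q = 1"
      using coprime by simp
    moreover have "\<forall>i\<in>{1..<n}. (t(0 := p 0)) i \<in> numerator_window (D_k n a b k * q * x i)
                                        (D_k n a b k * q * (\<delta> / 2 - c * R_k k powr (-1) / 2)) q"
      using t unfolding tails_def window_centre_def window_radius_def by auto
    ultimately have "z \<in> A_loc n a b c k x \<delta>"
      unfolding mem_A_loc_iff[OF n c] using z q first unfolding fibre_point_def by metis
    with \<open>z 0 = _\<close> show "z \<in> {z \<in> A_loc n a b c k x \<delta>. z 0 = slab_center n a b k p q 0}"
      by blast
  qed
qed

lemma inj_on_fibre_point: "inj_on fibre_point tails"
proof (rule inj_onI)
  fix s t assume "s \<in> tails" "t \<in> tails" "fibre_point s = fibre_point t"
  then have "s i = t i" if "i \<in> {1..<n}" for i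
    using that q D_k_pos[of n a b k] unfolding fibre_point_def
    by (auto simp: slab_center_simps dest!: fun_cong[of _ _ i])
  then show "s = t"
    using \<open>s \<in> tails\<close> \<open>t \<in> tails\<close> unfolding tails_def by (auto intro: PiE_ext)
qed

lemma crowded_fibre_subset:
  "{z \<in> crowded n (\<rho> / D_k n a b k) (A_loc n a b c k x \<delta>). z 0 = slab_center n a b k p q 0}
    \<subseteq> fibre_point ` approximable_tails \<rho>"
proof
  fix z assume "z \<in> {z \<in> crowded n (\<rho> / D_k n a b k) (A_loc n a b c k x \<delta>). z 0 = slab_center n a b k p q 0}"
  then obtain w j where "z \<in> A_loc n a b c k x \<delta>" "z 0 = slab_center n a b k p q 0"
    and "w \<in> A_loc n a b c k x \<delta>" and j: "j \<in> {1..<n}" "z j \<noteq> w j"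
    and close: "\<forall>i\<in>{1..<n}. \<bar>z i - w i\<bar> < \<rho> / D_k n a b k"
    unfolding crowded_def by blast
  then obtain t where t: "t \<in> tails" and z: "z = fibre_point t"
    using fibre_eq_image by blast
  from \<open>w \<in> A_loc n a b c k x \<delta>\<close> obtain p' q' where w: "w = slab_center n a b k p' q'"
    and q': "1 \<le> q'" "q' \<le> Q_k n a b k"
    unfolding mem_A_loc_iff[OF n c] by (elim exE conjE) (rule that; assumption)
  have "t j * q' \<noteq> p' j * q"
  proof
    assume "t j * q' = p' j * q"
    then have "z j - w j = 0"
      using j q q' slab_center_tail_diff[of j n q q' a b k "t(0 := p 0)" p']
      unfolding z w fibre_point_def by simp
    with j(2) show False
      by simp
  qed
  moreover have "\<bar>real_of_int (t i * q' - p' i * q)\<bar> < real_of_int (q * q') * \<rho>" if "i \<in> {1..<n}" for i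
    using that close q q' slab_center_tail_close_iff[of i n q q' a b k "t(0 := p 0)" p' \<rho>]
    unfolding z w fibre_point_def by auto
  ultimately have "t \<in> PiE {1..<n} (\<lambda>i. approximable_numerators (window_centre i) window_radius q q' \<rho> (i = j))"
    using t unfolding tails_def approximable_numerators_def by blast
  moreover have "q' \<in> {1..\<lfloor>Q_k n a b k\<rfloor>}"
    using q' by (simp add: le_floor_iff)
  ultimately show "z \<in> fibre_point ` approximable_tails \<rho>"
    unfolding approximable_tails_def z using j by blast
qed

lemma card_approximable_tails_le:
  assumes \<rho>: "\<rho> > 0" and wide: "4 \<le> D_k n a b k * (\<delta> - c * R_k k powr (-1))"
  shows "real (card (approximable_tails \<rho>)) \<le> (real n - 1) * (24 * \<rho>) ^ (n - 1) * Q_k n a b k ^ n * real (card tails)"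
proof -
  have "window_radius = q / 2 * (D_k n a b k * (\<delta> - c * R_k k powr (-1)))"
    by (simp add: window_radius_def algebra_simps)
  also have "\<dots> \<ge> q / 2 * 4"
    using wide q by (intro mult_left_mono) auto
  finally have "2 * q \<le> window_radius"
    by simp
  then show ?thesis
    using card_UN_PiE_approximable_numerators_le[of "{1..<n}" q \<rho> "Q_k n a b k" window_radius window_centre]
      q \<rho> Q_k_pos[of n a b k] n
    unfolding approximable_tails_def tails_def by (simp add: of_nat_diff)
qed

lemma card_crowded_fibre_le:
  assumes \<rho>: "\<rho> > 0" and wide: "4 \<le> D_k n a b k * (\<delta> - c * R_k k powr (-1))"
  shows "real (card {z \<in> crowded n (\<rho> / D_k n a b k) (A_loc n a b c k x \<delta>). z 0 = slab_center n a b k p q 0})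
    \<le> (real n - 1) * (24 * \<rho>) ^ (n - 1) * Q_k n a b k ^ n *
      real (card {z \<in> A_loc n a b c k x \<delta>. z 0 = slab_center n a b k p q 0})"
proof -
  have "finite (approximable_tails \<rho>)"
  proof (rule finite_subset)
    show "approximable_tails \<rho> \<subseteq> tails"
      unfolding approximable_tails_def tails_def approximable_numerators_def by (auto simp: PiE_iff)
    show "finite tails"
      unfolding tails_def by (simp add: finite_PiE finite_numerator_window)
  qed
  then have "card {z \<in> crowded n (\<rho> / D_k n a b k) (A_loc n a b c k x \<delta>). z 0 = slab_center n a b k p q 0}
      \<le> card (approximable_tails \<rho>)"
    using crowded_fibre_subset by (meson card_image_le card_mono finite_imageI order_trans)
  then have "real (card {z \<in> crowded n (\<rho> / D_k n a b k) (A_loc n a b c k x \<delta>). z 0 = slab_center n a b k p q 0})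
      \<le> real (card (approximable_tails \<rho>))"
    by simp
  also have "\<dots> \<le> (real n - 1) * (24 * \<rho>) ^ (n - 1) * Q_k n a b k ^ n * real (card tails)"
    by (rule card_approximable_tails_le[OF \<rho> wide])
  also have "card tails = card {z \<in> A_loc n a b c k x \<delta>. z 0 = slab_center n a b k p q 0}"
    unfolding fibre_eq_image by (rule card_image[symmetric, OF inj_on_fibre_point])
  finally show ?thesis .
qed

end

lemma card_le_by_fibres:
  fixes f :: "'a \<Rightarrow> 'b" and \<kappa> :: real
  assumes Z: "finite Z" and B: "B \<subseteq> Z"
    and fibres: "\<And>v. v \<in> f ` Z \<Longrightarrow> real (card {z \<in> B. f z = v}) \<le> \<kappa> * real (card {z \<in> Z. f z = v})"
  shows "real (card B) \<le> \<kappa> * real (card Z)"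
proof -
  have card_sum: "real (card A) = (\<Sum>v\<in>f ` Z. real (card {z \<in> A. f z = v}))" if "A \<subseteq> Z" for A
  proof -
    have "(\<Sum>v\<in>f ` Z. \<Sum>z\<in>{z \<in> A. f z = v}. 1) = (\<Sum>z\<in>A. 1::real)"
      using that Z by (intro sum.group) (auto intro: finite_subset)
    then show ?thesis
      by simp
  qed
  have "real (card B) = (\<Sum>v\<in>f ` Z. real (card {z \<in> B. f z = v}))"
    by (rule card_sum[OF B])
  also have "\<dots> \<le> (\<Sum>v\<in>f ` Z. \<kappa> * real (card {z \<in> Z. f z = v}))"
    by (rule sum_mono) (rule fibres)
  also have "\<dots> = \<kappa> * real (card Z)"
    by (simp add: card_sum[OF order_refl] sum_distrib_left)
  finally show ?thesis .
qed

lemma card_crowded_A_loc_le: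
  assumes n: "n \<ge> 1" and c: "c \<ge> 0" and \<rho>: "\<rho> > 0"
    and wide: "4 \<le> D_k n a b k * (\<delta> - c * R_k k powr (-1))"
    and finite: "finite (A_loc n a b c k x \<delta>)"
  shows "real (card (crowded n (\<rho> / D_k n a b k) (A_loc n a b c k x \<delta>)))
    \<le> (real n - 1) * (24 * \<rho>) ^ (n - 1) * Q_k n a b k ^ n * real (card (A_loc n a b c k x \<delta>))"
proof (rule card_le_by_fibres[OF finite, where f = "\<lambda>z. z 0"])
  show "crowded n (\<rho> / D_k n a b k) (A_loc n a b c k x \<delta>) \<subseteq> A_loc n a b c k x \<delta>"
    unfolding crowded_def by blast
  fix v assume "v \<in> (\<lambda>z. z 0) ` A_loc n a b c k x \<delta>"
  then obtain z0 where "z0 \<in> A_loc n a b c k x \<delta>" and v: "v = z0 0"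
    by blast
  then obtain p q where z0: "z0 = slab_center n a b k p q" and "gcd (p 0) q = 1" "1 \<le> q" "q \<le> Q_k n a b k"
    and "\<bar>z0 0 - x 0\<bar> \<le> \<delta> / 2 - c * R_k k powr (-1/2) / 2"
    unfolding mem_A_loc_iff[OF n c] by (elim exE conjE) (rule that; assumption)
  then interpret A_loc_fibre n a b c k x \<delta> p q
    using n c by unfold_locales (simp_all add: z0)
  show "real (card {z \<in> crowded n (\<rho> / D_k n a b k) (A_loc n a b c k x \<delta>). z 0 = v})
    \<le> (real n - 1) * (24 * \<rho>) ^ (n - 1) * Q_k n a b k ^ n * real (card {z \<in> A_loc n a b c k x \<delta>. z 0 = v})"
    unfolding v z0 by (rule card_crowded_fibre_le[OF \<rho> wide])
qed

lemma abs_le_tail_dist: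
  assumes "i \<in> {1..<n}"
  shows "\<bar>z i - w i\<bar> \<le> tail_dist n z w"
proof -
  have "(z i - w i)\<^sup>2 \<le> (\<Sum>l\<in>{1..<n}. (z l - w l)\<^sup>2)"
    using assms by (intro member_le_sum) auto
  then show ?thesis
    unfolding tail_dist_def using real_sqrt_le_mono by fastforce
qed

lemma A_loc_separated_subset:
  assumes n: "n \<ge> 1" and c: "c \<ge> 0" and \<rho>: "\<rho> > 0"
    and wide: "4 \<le> D_k n a b k * (\<delta> - c * R_k k powr (-1))"
    and sparse: "(real n - 1) * (24 * \<rho>) ^ (n - 1) * Q_k n a b k ^ n \<le> 1 / 2"
  shows "\<exists>A' \<subseteq> A_loc n a b c k x \<delta>. real (card (A_loc n a b c k x \<delta>)) \<le> 2 * real (card A') \<and>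
    (\<forall>z\<in>A'. \<forall>w\<in>A'. (\<exists>i\<in>{1..<n}. z i \<noteq> w i) \<longrightarrow> \<rho> / D_k n a b k \<le> tail_dist n z w)"
proof (cases "finite (A_loc n a b c k x \<delta>)")
  case False
  then show ?thesis
    by (intro exI[of _ "{}"]) simp
next
  case True
  define Z where "Z = A_loc n a b c k x \<delta>"
  define A' where "A' = Z - crowded n (\<rho> / D_k n a b k) Z"
  have sub: "crowded n (\<rho> / D_k n a b k) Z \<subseteq> Z"
    unfolding crowded_def by blast
  have "real (card (crowded n (\<rho> / D_k n a b k) Z)) \<le> 1 / 2 * real (card Z)"
    using card_crowded_A_loc_le[OF n c \<rho> wide True] sparse unfolding Z_def
    by (meson mult_right_mono of_nat_0_le_iff order_trans)
  moreover have "card A' = card Z - card (crowded n (\<rho> / D_k n a b k) Z)"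
    unfolding A'_def by (rule card_Diff_subset[OF finite_subset[OF sub] sub]) (simp add: True Z_def)
  moreover have "card (crowded n (\<rho> / D_k n a b k) Z) \<le> card Z"
    using True sub by (simp add: Z_def card_mono)
  ultimately have "real (card Z) \<le> 2 * real (card A')"
    by (simp add: of_nat_diff)
  moreover have "\<rho> / D_k n a b k \<le> tail_dist n z w"
    if "z \<in> A'" "w \<in> A'" "\<exists>i\<in>{1..<n}. z i \<noteq> w i" for z w
  proof -
    have "\<not> (\<forall>i\<in>{1..<n}. \<bar>z i - w i\<bar> < \<rho> / D_k n a b k)"
      using that unfolding A'_def crowded_def by blast
    then obtain i where "i \<in> {1..<n}" and "\<rho> / D_k n a b k \<le> \<bar>z i - w i\<bar>"
      by (auto simp: not_less)
    then show ?thesis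
      using abs_le_tail_dist[of i n z w] by linarith
  qed
  ultimately show ?thesis
    unfolding A'_def Z_def by blast
qed

lemma filterlim_D_k_window_at_top:
  assumes n: "n \<ge> 1" and a: "a \<le> 1" and b: "b \<ge> 0"
    and \<delta>: "\<delta> > 0"
  shows "filterlim (\<lambda>k. D_k n a b k * (\<delta> - c * R_k k powr (-1))) at_top sequentially"
proof -
  define e where "e = (real n - (real n - 1) * a + real n * b) / (real n + 1)"
  have "(real n - 1) * a \<le> real n - 1"
    using n a by (simp add: mult_left_le)
  then have e: "e > 0"
    unfolding e_def using b by (intro divide_pos_pos) (auto intro: add_pos_nonneg)
  have "filterlim (\<lambda>k::nat. ((2::real) ^ k) powr e * (\<delta> - c * ((2::real) ^ k) powr (-1))) at_top sequentially"
    using e \<delta> by real_asymp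
  then show ?thesis
    unfolding D_k_def R_k_def e_def .
qed

lemma crowding_factor_le_half:
  fixes Q :: real
  assumes n: "n \<ge> 2" and Q: "Q > 0"
  shows "(real n - 1) * (24 * (1 / (48 * (real n - 1)) / Q powr (real n / (real n - 1)))) ^ (n - 1) * Q ^ n
    \<le> 1 / 2"
proof -
  define C where "C = 1 / (48 * (real n - 1))"
  have n1: "real n - 1 > 0"
    using n by simp
  have "(Q powr (real n / (real n - 1))) ^ (n - 1) = Q powr (real n / (real n - 1) * real (n - 1))"
    using Q by (simp add: powr_realpow[symmetric] powr_powr)
  also have "real n / (real n - 1) * real (n - 1) = real n"
    using n n1 by (simp add: of_nat_diff)
  finally have "(Q powr (real n / (real n - 1))) ^ (n - 1) = Q ^ n"
    using Q by (simp add: powr_realpow)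
  then have "(24 * (C / Q powr (real n / (real n - 1)))) ^ (n - 1) * Q ^ n = (24 * C) ^ (n - 1)"
    using Q by (simp add: power_divide power_mult_distrib)
  moreover have "(24 * C) ^ (n - 1) \<le> 24 * C"
    using n n1 power_decreasing[of 1 "n - 1" "24 * C"] unfolding C_def by (simp add: field_simps)
  moreover have "(real n - 1) * (24 * C) = 1 / 2"
    using n1 unfolding C_def by (simp add: field_simps)
  ultimately show ?thesis
    using n1 unfolding C_def[symmetric]
    by (metis mult.assoc mult_left_mono less_imp_le)
qed

lemma A_loc_separated_half:
  assumes n: "n \<ge> 2" and c: "c \<ge> 0" and wide: "4 \<le> D_k n a b k * (\<delta> - c * R_k k powr (-1))"
  shows "\<exists>A' \<subseteq> A_loc n a b c k x \<delta>. real (card (A_loc n a b c k x \<delta>)) \<le> 2 * real (card A') \<and>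
    (\<forall>z\<in>A'. \<forall>w\<in>A'. (\<exists>i\<in>{1..<n}. z i \<noteq> w i) \<longrightarrow>
       1 / (48 * (real n - 1)) / (Q_k n a b k powr (real n / (real n - 1)) * D_k n a b k) \<le> tail_dist n z w)"
proof -
  define \<rho> where "\<rho> = 1 / (48 * (real n - 1)) / Q_k n a b k powr (real n / (real n - 1))"
  have "\<rho> > 0"
    using n Q_k_pos[of n a b k] by (simp add: \<rho>_def)
  moreover have "(real n - 1) * (24 * \<rho>) ^ (n - 1) * Q_k n a b k ^ n \<le> 1 / 2"
    unfolding \<rho>_def by (rule crowding_factor_le_half[OF n Q_k_pos])
  moreover have "\<rho> / D_k n a b k = 1 / (48 * (real n - 1)) / (Q_k n a b k powr (real n / (real n - 1)) * D_k n a b k)"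
    by (simp add: \<rho>_def)
  ultimately show ?thesis
    using A_loc_separated_subset[OF _ c _ wide, of \<rho>] n by auto
qed

theorem lemma5p4:
  fixes n :: nat and a b :: real
  assumes "n \<ge> 2" and "3/4 < a" and "a \<le> 1" and "b = 1/2"
  shows "\<exists>c0>0. \<forall>c. 0 < c \<and> c < c0 \<longrightarrow>
    (\<forall>(x :: nat \<Rightarrow> real) \<delta>. in_Rn n x \<and> 0 < \<delta> \<and> \<delta> < 1 \<longrightarrow>
      (\<forall>\<epsilon>>0. \<exists>C>0. \<exists>K. \<forall>k\<ge>K. \<exists>A'. A' \<subseteq> A_loc n a b c k x \<delta> \<and>
         real (card A') \<ge> C * R_k k powr (-\<epsilon>) * real (card (A_loc n a b c k x \<delta>)) \<and>
         (\<forall>z\<in>A'. \<forall>w\<in>A'. (\<exists>i\<in>{1..<n}. z i \<noteq> w i) \<longrightarrow>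
            tail_dist n z w \<ge> C / (Q_k n a b k powr (real n / (real n - 1)) * D_k n a b k))))"
proof (rule exI[of _ 1], intro conjI allI impI)
  show "(0::real) < 1"
    by simp
  fix c \<delta> \<epsilon> :: real and x :: "nat \<Rightarrow> real"
  assume "0 < c \<and> c < 1" and "in_Rn n x \<and> 0 < \<delta> \<and> \<delta> < 1" and "\<epsilon> > 0"
  then have c: "c > 0" and \<delta>: "\<delta> > 0" and \<epsilon>: "\<epsilon> \<ge> 0"
    by simp_all
  define C where "C = 1 / (48 * (real n - 1))"
  have C: "0 < C" "C \<le> 1 / 2"
    using assms(1) by (simp_all add: C_def field_simps)
  have "filterlim (\<lambda>k. D_k n a b k * (\<delta> - c * R_k k powr (-1))) at_top sequentially"
    by (rule filterlim_D_k_window_at_top) (use assms \<delta> in simp_all)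
  then obtain K where wide: "\<And>k. k \<ge> K \<Longrightarrow> 4 \<le> D_k n a b k * (\<delta> - c * R_k k powr (-1))"
    unfolding filterlim_at_top eventually_sequentially by blast
  have "\<exists>A'. A' \<subseteq> A_loc n a b c k x \<delta> \<and>
      real (card A') \<ge> C * R_k k powr (-\<epsilon>) * real (card (A_loc n a b c k x \<delta>)) \<and>
      (\<forall>z\<in>A'. \<forall>w\<in>A'. (\<exists>i\<in>{1..<n}. z i \<noteq> w i) \<longrightarrow>
         tail_dist n z w \<ge> C / (Q_k n a b k powr (real n / (real n - 1)) * D_k n a b k))"
    if k: "k \<ge> K" for k
  proof -
    obtain A' where A': "A' \<subseteq> A_loc n a b c k x \<delta>"
      and half: "real (card (A_loc n a b c k x \<delta>)) \<le> 2 * real (card A')"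
      and separated: "\<forall>z\<in>A'. \<forall>w\<in>A'. (\<exists>i\<in>{1..<n}. z i \<noteq> w i) \<longrightarrow>
         C / (Q_k n a b k powr (real n / (real n - 1)) * D_k n a b k) \<le> tail_dist n z w"
      using A_loc_separated_half[OF assms(1) less_imp_le[OF c] wide[OF k]] unfolding C_def by blast
    have "C * R_k k powr (-\<epsilon>) \<le> 1 / 2"
      using mult_left_le[OF R_k_powr_neg_le_one[OF \<epsilon>, of k] less_imp_le[OF C(1)]] C(2) by linarith
    from mult_right_mono[OF this of_nat_0_le_iff[of "card (A_loc n a b c k x \<delta>)"]] half
    have "C * R_k k powr (-\<epsilon>) * real (card (A_loc n a b c k x \<delta>)) \<le> real (card A')"
      by linarith
    with A' separated show ?thesis
      by blast
  qed
  then show "\<exists>C>0. \<exists>K. \<forall>k\<ge>K. \<exists>A'. A' \<subseteq> A_loc n a b c k x \<delta> \<and>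
      real (card A') \<ge> C * R_k k powr (-\<epsilon>) * real (card (A_loc n a b c k x \<delta>)) \<and>
      (\<forall>z\<in>A'. \<forall>w\<in>A'. (\<exists>i\<in>{1..<n}. z i \<noteq> w i) \<longrightarrow>
         tail_dist n z w \<ge> C / (Q_k n a b k powr (real n / (real n - 1)) * D_k n a b k))"
    using C(1) by blast
qed

end
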